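(* For a real parameter $m$ let $(\#)_m$ denote the equation $f''-\frac{m+1}6E_2f'+\frac{m(m+1)}{12}E_2'f=0$ for holomorphic $f$ on $\mathfrak H$. Let $k$ be a nonnegative integer or half an integer, and let $G_k$ and $G_{k-6}$ be solutions of $(\#)_k$ and $(\#)_{k-6}$ respectively. Then the function $G_{k+6}:=E_6G_k+\Delta G_{k-6}$ is a solution of $(\#)_{k+6}$ if and only if $$[G_k,E_4]=\frac23(k+1)\Delta G_{k-6}.$$
   Context: $\tau\in\mathfrak H$, $q=e^{2\pi i\tau}$, ${}'=\frac1{2\pi i}\frac d{d\tau}$. $E_2=1-24\sum_{n\ge1}\sigma_1(n)q^n$, $E_4=1+240\sum\sigma_3(n)q^n$, $E_6=1-504\sum\sigma_5(n)q^n$, $\Delta=(E_4^3-E_6^2)/1728$. Rankin–Cohen bracket: $[G_k,E_4]=kG_kE_4'-4G_k'E_4$ ($G_k$ regarded as of weight $k$, $E_4$ of weight $4$). *)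

theory Defs
  imports "HOL-Complex_Analysis.Complex_Analysis"
begin

definition UHP :: "complex set" where
  "UHP = {z. Im z > 0}"

definition sigma :: "nat \<Rightarrow> nat \<Rightarrow> nat" where
  "sigma k n = (\<Sum>d\<in>{d. d dvd n}. d ^ k)"

definition qn :: "complex \<Rightarrow> complex" where
  "qn \<tau> = exp (2 * pi * \<i> * \<tau>)"

definition E2 :: "complex \<Rightarrow> complex" where
  "E2 \<tau> = 1 - 24 * (\<Sum>n. of_nat (sigma 1 (Suc n)) * qn \<tau> ^ Suc n)"

definition E4 :: "complex \<Rightarrow> complex" where
  "E4 \<tau> = 1 + 240 * (\<Sum>n. of_nat (sigma 3 (Suc n)) * qn \<tau> ^ Suc n)"

definition E6 :: "complex \<Rightarrow> complex" where
  "E6 \<tau> = 1 - 504 * (\<Sum>n. of_nat (sigma 5 (Suc n)) * qn \<tau> ^ Suc n)"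

definition Delta :: "complex \<Rightarrow> complex" where
  "Delta \<tau> = (E4 \<tau> ^ 3 - E6 \<tau> ^ 2) / 1728"

text \<open>The normalized derivative f' = (1/(2 pi i)) df/d\<tau>.\<close>
definition Dq :: "(complex \<Rightarrow> complex) \<Rightarrow> complex \<Rightarrow> complex" where
  "Dq f \<tau> = deriv f \<tau> / (2 * pi * \<i>)"

definition solves_eq :: "real \<Rightarrow> (complex \<Rightarrow> complex) \<Rightarrow> bool" where
  "solves_eq m f \<longleftrightarrow> f holomorphic_on UHP \<and>
     (\<forall>\<tau>\<in>UHP. Dq (Dq f) \<tau> - of_real ((m + 1) / 6) * E2 \<tau> * Dq f \<tau>
                 + of_real (m * (m + 1) / 12) * Dq E2 \<tau> * f \<tau> = 0)"

text \<open>Rankin--Cohen bracket [G, E4] with G of weight k.\<close>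
definition RC_E4 :: "real \<Rightarrow> (complex \<Rightarrow> complex) \<Rightarrow> complex \<Rightarrow> complex" where
  "RC_E4 k G \<tau> = of_real k * G \<tau> * Dq E4 \<tau> - 4 * Dq G \<tau> * E4 \<tau>"

end

theory Submission
  imports Defs
begin

text \<open>
  With Ramanujan's identities \<open>12 E\<^sub>2' = E\<^sub>2\<^sup>2 - E\<^sub>4\<close>, \<open>3 E\<^sub>4' = E\<^sub>2 E\<^sub>4 - E\<^sub>6\<close>,
  \<open>2 E\<^sub>6' = E\<^sub>2 E\<^sub>6 - E\<^sub>4\<^sup>2\<close> (hence \<open>\<Delta>' = E\<^sub>2 \<Delta>\<close>), a direct computation shows, for the operator
  \<open>L\<^sub>m\<close> of \<open>(#)\<^sub>m\<close> and any holomorphic \<open>G, H\<close>,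
  \<open>L\<^sub>k\<^sub>+\<^sub>6 (E\<^sub>6 G + \<Delta> H) = E\<^sub>6 L\<^sub>k G + \<Delta> L\<^sub>k\<^sub>-\<^sub>6 H + E\<^sub>4/4 ([G, E\<^sub>4] - 2/3 (k + 1) \<Delta> H)\<close>.
  So for solutions \<open>G, H\<close> the combination solves \<open>(#)\<^sub>k\<^sub>+\<^sub>6\<close> iff \<open>E\<^sub>4\<close> times the bracket
  defect vanishes, and since \<open>E\<^sub>4\<close> is not identically zero on the connected half plane this
  means the defect vanishes.

  Ramanujan's identities are checked on \<open>q\<close>-expansions, where they amount to the classical
  evaluations of the convolution sums \<open>\<Sum>\<^sub>i \<sigma>\<^sub>a(i) \<sigma>\<^sub>b(K - i)\<close>. These are proved by Liouville's
  elementary method: such a sum counts the solutions of \<open>m x + n y = K\<close> with weight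
  \<open>m\<^sup>a n\<^sup>b\<close>, and the shear \<open>(m, n, x, y) \<mapsto> (n, m - n, x + y, x)\<close> makes a suitable symmetrised
  weight telescope onto the diagonals \<open>m = n\<close> and \<open>x = y\<close>, which are sums over divisors of \<open>K\<close>.
\<close>

section \<open>Convolution sums of divisor functions\<close>

definition mxny_reps :: "nat \<Rightarrow> (nat \<times> nat \<times> nat \<times> nat) set" where
  "mxny_reps K = {(m, n, x, y). 0 < m \<and> 0 < n \<and> 0 < x \<and> 0 < y \<and> m * x + n * y = K}"

lemma finite_mxny_reps [simp]: "finite (mxny_reps K)"
proof (rule finite_subset)
  show "mxny_reps K \<subseteq> {..K} \<times> {..K} \<times> {..K} \<times> {..K}"
    by (force simp: mxny_reps_def intro: le_trans[OF _ le_add1] le_trans[OF _ le_add2]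
        dest: mult_le_mono)
qed simp

lemma sum_partition3:
  assumes "finite A" "A \<subseteq> B \<union> C \<union> D" "B \<inter> C = {}" "B \<inter> D = {}" "C \<inter> D = {}"
  shows "sum f A = sum f (A \<inter> B) + sum f (A \<inter> C) + sum f (A \<inter> D)"
proof -
  have "sum f A = sum f ((A \<inter> B \<union> A \<inter> C) \<union> A \<inter> D)"
    using assms(2) by (intro arg_cong[where f = "sum f"]) auto
  also have "\<dots> = sum f (A \<inter> B \<union> A \<inter> C) + sum f (A \<inter> D)"
    by (rule sum.union_disjoint) (use assms in auto)
  also have "sum f (A \<inter> B \<union> A \<inter> C) = sum f (A \<inter> B) + sum f (A \<inter> C)"
    by (rule sum.union_disjoint) (use assms in auto)
  finally show ?thesis .
qed

lemma sum_mxny_reps_swap: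
  fixes \<phi> :: "nat \<Rightarrow> nat \<Rightarrow> 'a::comm_monoid_add"
  shows "(\<Sum>(m,n,x,y)\<in>mxny_reps K. \<phi> m n) =
     (\<Sum>(m,n,x,y)\<in>mxny_reps K \<inter> {(m,n,x,y). m = n}. \<phi> m m) +
     (\<Sum>(m,n,x,y)\<in>mxny_reps K \<inter> {(m,n,x,y). n < m}. \<phi> m n + \<phi> n m)"
proof -
  let ?E = "mxny_reps K \<inter> {(m,n,x,y). m = n}"
  let ?G = "mxny_reps K \<inter> {(m,n,x,y). n < m}"
  let ?L = "mxny_reps K \<inter> {(m,n,x,y). m < n}"
  have "(\<Sum>(m,n,x,y)\<in>mxny_reps K. \<phi> m n) =
      (\<Sum>(m,n,x,y)\<in>?E. \<phi> m n) + (\<Sum>(m,n,x,y)\<in>?G. \<phi> m n) + (\<Sum>(m,n,x,y)\<in>?L. \<phi> m n)"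
    by (rule sum_partition3) auto
  moreover have "(\<Sum>(m,n,x,y)\<in>?E. \<phi> m n) = (\<Sum>(m,n,x,y)\<in>?E. \<phi> m m)"
    by (rule sum.cong) auto
  moreover have "(\<Sum>(m,n,x,y)\<in>?L. \<phi> m n) = (\<Sum>(m,n,x,y)\<in>?G. \<phi> n m)"
    by (rule sum.reindex_bij_witness[of _ "\<lambda>(m,n,x,y). (n,m,y,x)" "\<lambda>(m,n,x,y). (n,m,y,x)"])
       (auto simp: mxny_reps_def)
  ultimately show ?thesis by (simp add: sum.distrib split_def add.assoc)
qed

lemma sum_mxny_reps_shear:
  fixes \<phi> :: "nat \<Rightarrow> nat \<Rightarrow> 'a::comm_monoid_add"
  shows "(\<Sum>(m,n,x,y)\<in>mxny_reps K. \<phi> m n) =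
     (\<Sum>(m,n,x,y)\<in>mxny_reps K \<inter> {(m,n,x,y). x = y}. \<phi> m n) +
     (\<Sum>(m,n,x,y)\<in>mxny_reps K \<inter> {(m,n,x,y). n < m}. \<phi> n (m - n) + \<phi> (m - n) n)"
proof -
  let ?E = "mxny_reps K \<inter> {(m,n,x,y). x = y}"
  let ?A = "mxny_reps K \<inter> {(m,n,x,y). y < x}"
  let ?B = "mxny_reps K \<inter> {(m,n,x,y). x < y}"
  let ?G = "mxny_reps K \<inter> {(m,n,x,y). n < m}"
  have "(\<Sum>(m,n,x,y)\<in>mxny_reps K. \<phi> m n) =
      (\<Sum>(m,n,x,y)\<in>?E. \<phi> m n) + (\<Sum>(m,n,x,y)\<in>?A. \<phi> m n) + (\<Sum>(m,n,x,y)\<in>?B. \<phi> m n)"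
    by (rule sum_partition3) auto
  moreover have "(\<Sum>(m,n,x,y)\<in>?A. \<phi> m n) = (\<Sum>(m,n,x,y)\<in>?G. \<phi> n (m - n))"
    by (rule sum.reindex_bij_witness[of _ "\<lambda>(a,b,s,t). (b, a - b, s + t, s)"
          "\<lambda>(m,n,x,y). (m + n, m, y, x - y)"])
       (auto simp: mxny_reps_def algebra_simps diff_mult_distrib2 intro!: le_add_diff_inverse
          intro: trans_le_add1[OF mult_le_mono1[OF less_imp_le]]
            trans_le_add1[OF mult_le_mono2[OF less_imp_le]] trans_less_add1 mult_less_mono1
            mult_less_mono2)
  moreover have "(\<Sum>(m,n,x,y)\<in>?B. \<phi> m n) = (\<Sum>(m,n,x,y)\<in>?G. \<phi> (m - n) n)"
    by (rule sum.reindex_bij_witness[of _ "\<lambda>(a,b,s,t). (a - b, b, s, s + t)"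
          "\<lambda>(m,n,x,y). (m + n, n, x, y - x)"])
       (auto simp: mxny_reps_def algebra_simps diff_mult_distrib2 intro!: le_add_diff_inverse
          intro: trans_le_add1[OF mult_le_mono1[OF less_imp_le]]
            trans_le_add1[OF mult_le_mono2[OF less_imp_le]] trans_less_add1 mult_less_mono1
            mult_less_mono2)
  ultimately show ?thesis by (simp add: sum.distrib split_def add.assoc)
qed

lemma sum_mxny_reps_telescope:
  fixes \<phi> :: "nat \<Rightarrow> nat \<Rightarrow> 'a::ab_group_add"
  shows "(\<Sum>(m,n,x,y)\<in>mxny_reps K \<inter> {(m,n,x,y). n < m}.
            \<phi> m n + \<phi> n m - \<phi> n (m - n) - \<phi> (m - n) n) =
     (\<Sum>(m,n,x,y)\<in>mxny_reps K \<inter> {(m,n,x,y). x = y}. \<phi> m n) -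
     (\<Sum>(m,n,x,y)\<in>mxny_reps K \<inter> {(m,n,x,y). m = n}. \<phi> m m)"
  using sum_mxny_reps_swap[of \<phi> K] sum_mxny_reps_shear[of \<phi> K]
  by (simp add: split_def sum_subtractf algebra_simps)

lemma sum_mxny_reps_diag_mn:
  assumes "K > 0"
  shows "(\<Sum>(m,n,x,y)\<in>mxny_reps K \<inter> {(m,n,x,y). m = n}. f m) =
     (\<Sum>d | d dvd K. (real (K div d) - 1) * f d)"
proof -
  have "(\<Sum>(m,n,x,y)\<in>mxny_reps K \<inter> {(m,n,x,y). m = n}. f m) =
        (\<Sum>(d,x)\<in>(SIGMA d:{d. d dvd K}. {1..<K div d}). f d)"
  proof (rule sum.reindex_bij_witness[of _ "\<lambda>(d,x). (d, d, x, K div d - x)" "\<lambda>(m,n,x,y). (m,x)"])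
    fix p assume "p \<in> (SIGMA d:{d. d dvd K}. {1..<K div d})"
    then obtain d x where p: "p = (d, x)" "d dvd K" "1 \<le> x" "x < K div d" by auto
    then have "d * x + d * (K div d - x) = d * (K div d)"
      by (simp flip: add_mult_distrib2)
    also have "\<dots> = K"
      using p by simp
    finally show "(\<lambda>(d,x). (d, d, x, K div d - x)) p \<in> mxny_reps K \<inter> {(m,n,x,y). m = n}"
      using p by (auto simp: mxny_reps_def intro!: Nat.gr0I)
  qed (auto simp: mxny_reps_def simp flip: add_mult_distrib2)
  also have "\<dots> = (\<Sum>d | d dvd K. \<Sum>x\<in>{1..<K div d}. f d)"
    using assms by (subst sum.Sigma) auto
  also have "\<dots> = (\<Sum>d | d dvd K. (real (K div d) - 1) * f d)"
    using assms by (intro sum.cong refl) (auto simp: of_nat_diff Suc_le_eq dvd_div_eq_0_iff)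
  finally show ?thesis .
qed

lemma sum_mxny_reps_diag_xy:
  assumes "K > 0"
  shows "(\<Sum>(m,n,x,y)\<in>mxny_reps K \<inter> {(m,n,x,y). x = y}. \<phi> m n) =
     (\<Sum>N | N dvd K. \<Sum>m\<in>{0<..<N}. \<phi> m (N - m))"
proof -
  have "(\<Sum>(m,n,x,y)\<in>mxny_reps K \<inter> {(m,n,x,y). x = y}. \<phi> m n) =
        (\<Sum>(N,m)\<in>(SIGMA N:{N. N dvd K}. {0<..<N}). \<phi> m (N - m))"
  proof (rule sum.reindex_bij_witness[of _ "\<lambda>(N,m). (m, N - m, K div N, K div N)"
        "\<lambda>(m,n,x,y). (m + n, m)"])
    fix p assume "p \<in> (SIGMA N:{N. N dvd K}. {0<..<N})"
    then obtain N m where p: "p = (N, m)" "N dvd K" "0 < m" "m < N" by auto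
    then have "m * (K div N) + (N - m) * (K div N) = N * (K div N)"
      by (simp flip: add_mult_distrib)
    also have "\<dots> = K"
      using p by simp
    finally show "(\<lambda>(N,m). (m, N - m, K div N, K div N)) p \<in> mxny_reps K \<inter> {(m,n,x,y). x = y}"
      using p assms by (auto simp: mxny_reps_def intro!: Nat.gr0I)
  qed (auto simp: mxny_reps_def simp flip: add_mult_distrib)
  also have "\<dots> = (\<Sum>N | N dvd K. \<Sum>m\<in>{0<..<N}. \<phi> m (N - m))"
    using assms by (subst sum.Sigma) auto
  finally show ?thesis .
qed

lemma sigma_0 [simp]: "sigma r 0 = 0"
  by (simp add: sigma_def)

definition divisor_conv :: "nat \<Rightarrow> nat \<Rightarrow> nat \<Rightarrow> real" where
  "divisor_conv a b K = (\<Sum>i=0..K. real (sigma a i) * real (sigma b (K - i)))"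

lemma divisor_conv_eq_sum_mxny_reps:
  "divisor_conv a b K = (\<Sum>(m,n,x,y)\<in>mxny_reps K. real m ^ a * real n ^ b)"
proof -
  have "divisor_conv a b K = (\<Sum>i\<in>{0<..<K}. real (sigma a i) * real (sigma b (K - i)))"
    unfolding divisor_conv_def by (rule sum.mono_neutral_right) (auto simp: sigma_def)
  also have "\<dots> = (\<Sum>i\<in>{0<..<K}. \<Sum>(d,e)\<in>{d. d dvd i} \<times> {e. e dvd K - i}. real d ^ a * real e ^ b)"
    by (intro sum.cong refl) (auto simp: sigma_def sum_product sum.cartesian_product)
  also have "\<dots> = (\<Sum>(i,d,e)\<in>(SIGMA i:{0<..<K}. {d. d dvd i} \<times> {e. e dvd K - i}).
      real d ^ a * real e ^ b)"
    by (subst sum.Sigma) (auto simp: split_def)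
  also have "\<dots> = (\<Sum>(m,n,x,y)\<in>mxny_reps K. real m ^ a * real n ^ b)"
  proof (rule sum.reindex_bij_witness[of _ "\<lambda>(m,n,x,y). (m * x, m, n)"
        "\<lambda>(i,d,e). (d, e, i div d, (K - i) div e)"])
    fix q assume "q \<in> (SIGMA i:{0<..<K}. {d. d dvd i} \<times> {e. e dvd K - i})"
    then obtain i d e where q: "q = (i, d, e)" "0 < i" "i < K" "d dvd i" "e dvd K - i" by auto
    then have "0 < d" "0 < e" "0 < i div d" "0 < (K - i) div e"
      by (auto intro!: Nat.gr0I simp: dvd_div_eq_0_iff)
    moreover have "d * (i div d) + e * ((K - i) div e) = K"
      using q by simp
    ultimately show "(\<lambda>(i,d,e). (d, e, i div d, (K - i) div e)) q \<in> mxny_reps K"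
      using q by (simp add: mxny_reps_def)
  qed (auto simp: mxny_reps_def)
  finally show ?thesis .
qed

lemma sum_lessThan_power_1: "(\<Sum>m<N. real m) = real N * (real N - 1) / 2"
  by (induction N) (simp_all add: field_simps)
lemma sum_lessThan_power_2: "(\<Sum>m<N. real m ^ 2) = real N * (real N - 1) * (2 * real N - 1) / 6"
  by (induction N) (simp_all add: field_simps power2_eq_square)
lemma sum_lessThan_power_3: "(\<Sum>m<N. real m ^ 3) = (real N * (real N - 1)) ^ 2 / 4"
  by (induction N) (simp_all add: field_simps power2_eq_square power3_eq_cube)
lemma sum_lessThan_power_4:
  "(\<Sum>m<N. real m ^ 4) =
     real N * (real N - 1) * (2 * real N - 1) * (3 * real N ^ 2 - 3 * real N - 1) / 30"
  by (induction N) (simp_all add: field_simps eval_nat_numeral)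
lemma sum_lessThan_power_5:
  "(\<Sum>m<N. real m ^ 5) = (real N * (real N - 1)) ^ 2 * (2 * real N ^ 2 - 2 * real N - 1) / 12"
  by (induction N) (simp_all add: field_simps eval_nat_numeral)
lemma sum_lessThan_power_6:
  "(\<Sum>m<N. real m ^ 6) =
     real N * (real N - 1) * (2 * real N - 1)
       * (3 * real N ^ 4 - 6 * real N ^ 3 + 3 * real N + 1) / 42"
  by (induction N) (simp_all add: field_simps eval_nat_numeral)

lemma sum_mult_complement_1:
  "(\<Sum>m\<in>{0<..<N}. real m * (real N - real m)) = (real N ^ 3 - real N) / 6"
proof -
  have "(\<Sum>m\<in>{0<..<N}. real m * (real N - real m)) = (\<Sum>m<N. real N * real m - real m ^ 2)"
    by (rule sum.mono_neutral_cong_left) (auto simp: algebra_simps power2_eq_square)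
  also have "\<dots> = real N * (\<Sum>m<N. real m) - (\<Sum>m<N. real m ^ 2)"
    by (simp add: sum_subtractf sum_distrib_left)
  also have "\<dots> = (real N ^ 3 - real N) / 6"
    unfolding sum_lessThan_power_1 sum_lessThan_power_2 by (simp add: field_simps eval_nat_numeral)
  finally show ?thesis .
qed

lemma sum_mult_complement_2:
  "(\<Sum>m\<in>{0<..<N}. (real m * (real N - real m)) ^ 2) = (real N ^ 5 - real N) / 30"
proof -
  have "(\<Sum>m\<in>{0<..<N}. (real m * (real N - real m)) ^ 2) =
      (\<Sum>m<N. real N ^ 2 * real m ^ 2 - 2 * real N * real m ^ 3 + real m ^ 4)"
    by (rule sum.mono_neutral_cong_left) (auto simp: algebra_simps eval_nat_numeral)
  also have "\<dots> = real N ^ 2 * (\<Sum>m<N. real m ^ 2) - 2 * real N * (\<Sum>m<N. real m ^ 3)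
      + (\<Sum>m<N. real m ^ 4)"
    by (simp add: sum.distrib sum_subtractf sum_distrib_left mult.assoc)
  also have "\<dots> = (real N ^ 5 - real N) / 30"
    unfolding sum_lessThan_power_2 sum_lessThan_power_3 sum_lessThan_power_4
    by (simp add: field_simps eval_nat_numeral)
  finally show ?thesis .
qed

lemma sum_mult_complement_3:
  "(\<Sum>m\<in>{0<..<N}. (real m * (real N - real m)) ^ 3) =
     (3 * real N ^ 7 + 7 * real N ^ 3 - 10 * real N) / 420"
proof -
  have "(\<Sum>m\<in>{0<..<N}. (real m * (real N - real m)) ^ 3) =
      (\<Sum>m<N. real N ^ 3 * real m ^ 3 - 3 * real N ^ 2 * real m ^ 4 + 3 * real N * real m ^ 5
        - real m ^ 6)"
    by (rule sum.mono_neutral_cong_left) (auto simp: algebra_simps eval_nat_numeral)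
  also have "\<dots> = real N ^ 3 * (\<Sum>m<N. real m ^ 3) - 3 * real N ^ 2 * (\<Sum>m<N. real m ^ 4)
      + 3 * real N * (\<Sum>m<N. real m ^ 5) - (\<Sum>m<N. real m ^ 6)"
    by (simp add: sum.distrib sum_subtractf sum_distrib_left mult.assoc)
  also have "\<dots> = (3 * real N ^ 7 + 7 * real N ^ 3 - 10 * real N) / 420"
    unfolding sum_lessThan_power_3 sum_lessThan_power_4 sum_lessThan_power_5 sum_lessThan_power_6
    by (simp add: field_simps eval_nat_numeral)
  finally show ?thesis .
qed

lemma sum_mult_complement_poly:
  assumes "N > 0"
  shows "(\<Sum>m\<in>{0<..<N}. a + b * (real m * (real N - real m)) + c * (real m * (real N - real m)) ^ 2
            + e * (real m * (real N - real m)) ^ 3) =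
    (real N - 1) * a + b * (real N ^ 3 - real N) / 6 + c * (real N ^ 5 - real N) / 30
      + e * (3 * real N ^ 7 + 7 * real N ^ 3 - 10 * real N) / 420"
  using assms
  by (simp add: sum.distrib of_nat_diff flip: sum_distrib_left)
     (simp add: sum_mult_complement_1 sum_mult_complement_2 sum_mult_complement_3)

lemma sum_mxny_reps_by_kernel:
  fixes \<phi> \<Psi> :: "nat \<Rightarrow> nat \<Rightarrow> real"
  assumes "K > 0"
    and kernel: "\<And>m n. n < m \<Longrightarrow> \<phi> m n + \<phi> n m = c * (\<Psi> m n + \<Psi> n m - \<Psi> n (m - n) - \<Psi> (m - n) n)"
  shows "(\<Sum>(m,n,x,y)\<in>mxny_reps K. \<phi> m n) =
    (\<Sum>d | d dvd K. (real (K div d) - 1) * (\<phi> d d - c * \<Psi> d d) + c * (\<Sum>m\<in>{0<..<d}. \<Psi> m (d - m)))"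
proof -
  have "(\<Sum>(m,n,x,y)\<in>mxny_reps K \<inter> {(m,n,x,y). n < m}. \<phi> m n + \<phi> n m) =
        c * (\<Sum>(m,n,x,y)\<in>mxny_reps K \<inter> {(m,n,x,y). n < m}.
          \<Psi> m n + \<Psi> n m - \<Psi> n (m - n) - \<Psi> (m - n) n)"
    by (auto simp: sum_distrib_left kernel intro!: sum.cong)
  also have "\<dots> = c * ((\<Sum>N | N dvd K. \<Sum>m\<in>{0<..<N}. \<Psi> m (N - m))
      - (\<Sum>d | d dvd K. (real (K div d) - 1) * \<Psi> d d))"
    by (simp only: sum_mxny_reps_telescope sum_mxny_reps_diag_xy[OF assms(1)]
        sum_mxny_reps_diag_mn[OF assms(1)])
  finally show ?thesis
    by (simp add: sum_mxny_reps_swap[of \<phi>] sum_mxny_reps_diag_mn[OF assms(1)] sum.distrib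
        sum_subtractf sum_distrib_left algebra_simps)
qed

lemma divisor_conv_1_1:
  "12 * divisor_conv 1 1 K =
     5 * real (sigma 3 K) + real (sigma 1 K) - 6 * real K * real (sigma 1 K)"
proof (cases "K = 0")
  case False
  define \<Psi> :: "nat \<Rightarrow> nat \<Rightarrow> real" where "\<Psi> m n = real m ^ 2 + real m * real n + real n ^ 2" for m n
  have "divisor_conv 1 1 K = (\<Sum>d | d dvd K. (real (K div d) - 1) * (real d * real d - 1/2 * \<Psi> d d)
      + 1/2 * (\<Sum>m\<in>{0<..<d}. \<Psi> m (d - m)))"
    unfolding divisor_conv_eq_sum_mxny_reps power_one_right using False
    by (intro sum_mxny_reps_by_kernel) (auto simp: \<Psi>_def of_nat_diff algebra_simps power2_eq_square)
  also have "\<dots> = (\<Sum>d | d dvd K. (5 * real d ^ 3 + real d - 6 * real K * real d) / 12)"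
  proof (intro sum.cong refl)
    fix d assume "d \<in> {d. d dvd K}"
    with False have d: "0 < d" "real K = real d * real (K div d)"
      by (auto intro!: Nat.gr0I simp flip: of_nat_mult)
    have "(\<Sum>m\<in>{0<..<d}. \<Psi> m (d - m)) =
        (\<Sum>m\<in>{0<..<d}. real d ^ 2 + (-1) * (real m * (real d - real m))
          + 0 * (real m * (real d - real m)) ^ 2 + 0 * (real m * (real d - real m)) ^ 3)"
      by (intro sum.cong refl) (auto simp: \<Psi>_def of_nat_diff algebra_simps power2_eq_square)
    then show "(real (K div d) - 1) * (real d * real d - 1/2 * \<Psi> d d)
        + 1/2 * (\<Sum>m\<in>{0<..<d}. \<Psi> m (d - m)) = (5 * real d ^ 3 + real d - 6 * real K * real d) / 12"
      unfolding d(2) sum_mult_complement_poly[OF d(1)]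
      by (simp add: \<Psi>_def field_simps eval_nat_numeral)
  qed
  finally show ?thesis
    by (simp add: sigma_def sum_subtractf sum.distrib sum_distrib_left flip: sum_divide_distrib)
qed (simp add: divisor_conv_def)

lemma divisor_conv_1_3:
  "240 * divisor_conv 1 3 K =
     21 * real (sigma 5 K) + 10 * real (sigma 3 K) - real (sigma 1 K)
       - 30 * real K * real (sigma 3 K)"
proof (cases "K = 0")
  case False
  define \<Psi> :: "nat \<Rightarrow> nat \<Rightarrow> real"
    where "\<Psi> m n = (real m ^ 2 + real m * real n + real n ^ 2) ^ 2" for m n
  have "divisor_conv 1 3 K =
      (\<Sum>d | d dvd K. (real (K div d) - 1) * (real d * real d ^ 3 - 1/8 * \<Psi> d d)
        + 1/8 * (\<Sum>m\<in>{0<..<d}. \<Psi> m (d - m)))"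
    unfolding divisor_conv_eq_sum_mxny_reps power_one_right using False
    by (intro sum_mxny_reps_by_kernel) (auto simp: \<Psi>_def of_nat_diff algebra_simps eval_nat_numeral)
  also have "\<dots> =
      (\<Sum>d | d dvd K. (21 * real d ^ 5 + 10 * real d ^ 3 - real d - 30 * real K * real d ^ 3) / 240)"
  proof (intro sum.cong refl)
    fix d assume "d \<in> {d. d dvd K}"
    with False have d: "0 < d" "real K = real d * real (K div d)"
      by (auto intro!: Nat.gr0I simp flip: of_nat_mult)
    have "(\<Sum>m\<in>{0<..<d}. \<Psi> m (d - m)) =
        (\<Sum>m\<in>{0<..<d}. real d ^ 4 + (- 2 * real d ^ 2) * (real m * (real d - real m))
          + 1 * (real m * (real d - real m)) ^ 2 + 0 * (real m * (real d - real m)) ^ 3)"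
      by (intro sum.cong refl) (auto simp: \<Psi>_def of_nat_diff algebra_simps eval_nat_numeral)
    then show "(real (K div d) - 1) * (real d * real d ^ 3 - 1/8 * \<Psi> d d)
        + 1/8 * (\<Sum>m\<in>{0<..<d}. \<Psi> m (d - m))
        = (21 * real d ^ 5 + 10 * real d ^ 3 - real d - 30 * real K * real d ^ 3) / 240"
      unfolding d(2) sum_mult_complement_poly[OF d(1)]
      by (simp add: \<Psi>_def field_simps eval_nat_numeral)
  qed
  finally show ?thesis
    by (simp add: sigma_def sum_subtractf sum.distrib sum_distrib_left flip: sum_divide_distrib)
qed (simp add: divisor_conv_def)

lemma divisor_conv_1_5_3_3:
  "12096 * divisor_conv 1 5 K - 57600 * divisor_conv 3 3 K =
     504 * real (sigma 5 K) + 24 * real (sigma 1 K) + 480 * real (sigma 3 K)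
       - 1008 * real K * real (sigma 5 K)"
proof (cases "K = 0")
  case False
  define \<Psi> :: "nat \<Rightarrow> nat \<Rightarrow> real" where
    "\<Psi> m n = 2016 * (real m ^ 6 + real n ^ 6) + 6048 * (real m ^ 5 * real n + real m * real n ^ 5)
       - 23760 * (real m ^ 4 * real n ^ 2 + real m ^ 2 * real n ^ 4)
       - 57600 * real m ^ 3 * real n ^ 3" for m n
  have "12096 * divisor_conv 1 5 K - 57600 * divisor_conv 3 3 K =
      (\<Sum>(m,n,x,y)\<in>mxny_reps K. 12096 * real m * real n ^ 5 - 57600 * real m ^ 3 * real n ^ 3)"
    by (simp add: divisor_conv_eq_sum_mxny_reps sum_subtractf sum_distrib_left split_def mult.assoc)
  also have "\<dots> = (\<Sum>d | d dvd K.
      (real (K div d) - 1)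
        * (12096 * real d * real d ^ 5 - 57600 * real d ^ 3 * real d ^ 3 - 1/2 * \<Psi> d d)
        + 1/2 * (\<Sum>m\<in>{0<..<d}. \<Psi> m (d - m)))"
    using False
    by (intro sum_mxny_reps_by_kernel) (auto simp: \<Psi>_def of_nat_diff algebra_simps eval_nat_numeral)
  also have "\<dots> =
      (\<Sum>d | d dvd K.
        504 * real d ^ 5 + 24 * real d + 480 * real d ^ 3 - 1008 * real K * real d ^ 5)"
  proof (intro sum.cong refl)
    fix d assume "d \<in> {d. d dvd K}"
    with False have d: "0 < d" "real K = real d * real (K div d)"
      by (auto intro!: Nat.gr0I simp flip: of_nat_mult)
    have "(\<Sum>m\<in>{0<..<d}. \<Psi> m (d - m)) =
        (\<Sum>m\<in>{0<..<d}. 2016 * real d ^ 6 + (- 6048 * real d ^ 4) * (real m * (real d - real m))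
          + (- 29808 * real d ^ 2) * (real m * (real d - real m)) ^ 2
          + (- 2016) * (real m * (real d - real m)) ^ 3)"
      by (intro sum.cong refl) (auto simp: \<Psi>_def of_nat_diff algebra_simps eval_nat_numeral)
    then show "(real (K div d) - 1)
          * (12096 * real d * real d ^ 5 - 57600 * real d ^ 3 * real d ^ 3 - 1/2 * \<Psi> d d)
        + 1/2 * (\<Sum>m\<in>{0<..<d}. \<Psi> m (d - m))
        = 504 * real d ^ 5 + 24 * real d + 480 * real d ^ 3 - 1008 * real K * real d ^ 5"
      unfolding d(2) sum_mult_complement_poly[OF d(1)]
      by (simp add: \<Psi>_def field_simps eval_nat_numeral)
  qed
  finally show ?thesis
    by (simp add: sigma_def sum_subtractf sum.distrib sum_distrib_left)
qed (simp add: divisor_conv_def)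


section \<open>Ramanujan's identities for \<open>q\<close>-expansions\<close>

definition sigma_fps :: "nat \<Rightarrow> complex fps" where
  "sigma_fps r = Abs_fps (\<lambda>n. of_nat (sigma r n))"

definition E2_fps :: "complex fps" where "E2_fps = 1 - 24 * sigma_fps 1"
definition E4_fps :: "complex fps" where "E4_fps = 1 + 240 * sigma_fps 3"
definition E6_fps :: "complex fps" where "E6_fps = 1 - 504 * sigma_fps 5"

lemma sigma_fps_nth [simp]: "sigma_fps r $ n = of_nat (sigma r n)"
  by (simp add: sigma_fps_def)

lemma sigma_fps_mult_nth [simp]: "(sigma_fps a * sigma_fps b) $ K = of_real (divisor_conv a b K)"
  by (simp add: fps_mult_nth divisor_conv_def)

lemma fps_XD_E2_fps: "12 * fps_XD E2_fps = E2_fps ^ 2 - E4_fps"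
proof (rule fps_ext)
  fix K
  have "E2_fps ^ 2 - E4_fps =
      576 * (sigma_fps 1 * sigma_fps 1) - 48 * sigma_fps 1 - 240 * sigma_fps 3"
    by (simp add: E2_fps_def E4_fps_def algebra_simps power2_eq_square)
  then have "(E2_fps ^ 2 - E4_fps) $ K =
      of_real (576 * divisor_conv 1 1 K - 48 * real (sigma 1 K) - 240 * real (sigma 3 K))"
    by (simp add: numeral_fps_const)
  also have "\<dots> = of_real (- 288 * real K * real (sigma 1 K))"
    using divisor_conv_1_1[of K] by (intro arg_cong[where f = of_real]) simp
  also have "\<dots> = (12 * fps_XD E2_fps) $ K"
    by (simp add: E2_fps_def numeral_fps_const)
  finally show "(12 * fps_XD E2_fps) $ K = (E2_fps ^ 2 - E4_fps) $ K" ..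
qed

lemma fps_XD_E4_fps: "3 * fps_XD E4_fps = E2_fps * E4_fps - E6_fps"
proof (rule fps_ext)
  fix K
  have "E2_fps * E4_fps - E6_fps =
      240 * sigma_fps 3 - 24 * sigma_fps 1 - 5760 * (sigma_fps 1 * sigma_fps 3) + 504 * sigma_fps 5"
    by (simp add: E2_fps_def E4_fps_def E6_fps_def algebra_simps)
  then have "(E2_fps * E4_fps - E6_fps) $ K =
      of_real (240 * real (sigma 3 K) - 24 * real (sigma 1 K)
        - 5760 * divisor_conv 1 3 K + 504 * real (sigma 5 K))"
    by (simp add: numeral_fps_const)
  also have "\<dots> = of_real (720 * real K * real (sigma 3 K))"
    using divisor_conv_1_3[of K] by (intro arg_cong[where f = of_real]) simp
  also have "\<dots> = (3 * fps_XD E4_fps) $ K"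
    by (simp add: E4_fps_def numeral_fps_const)
  finally show "(3 * fps_XD E4_fps) $ K = (E2_fps * E4_fps - E6_fps) $ K" ..
qed

lemma fps_XD_E6_fps: "2 * fps_XD E6_fps = E2_fps * E6_fps - E4_fps ^ 2"
proof (rule fps_ext)
  fix K
  have "E2_fps * E6_fps - E4_fps ^ 2 =
      12096 * (sigma_fps 1 * sigma_fps 5) - 57600 * (sigma_fps 3 * sigma_fps 3)
        - 504 * sigma_fps 5 - 24 * sigma_fps 1 - 480 * sigma_fps 3"
    by (simp add: E2_fps_def E4_fps_def E6_fps_def algebra_simps power2_eq_square)
  then have "(E2_fps * E6_fps - E4_fps ^ 2) $ K =
      of_real (12096 * divisor_conv 1 5 K - 57600 * divisor_conv 3 3 K
        - 504 * real (sigma 5 K) - 24 * real (sigma 1 K) - 480 * real (sigma 3 K))"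
    by (simp add: numeral_fps_const)
  also have "\<dots> = of_real (- 1008 * real K * real (sigma 5 K))"
    using divisor_conv_1_5_3_3[of K] by (intro arg_cong[where f = of_real]) simp
  also have "\<dots> = (2 * fps_XD E6_fps) $ K"
    by (simp add: E6_fps_def numeral_fps_const)
  finally show "(2 * fps_XD E6_fps) $ K = (E2_fps * E6_fps - E4_fps ^ 2) $ K" ..
qed


section \<open>Convergence on the unit disc\<close>

lemma fps_conv_radius_le_of_norm_le:
  fixes F G :: "'a::{banach, real_normed_div_algebra} fps"
  assumes "\<And>n. norm (F $ n) \<le> norm (G $ n)"
  shows "fps_conv_radius G \<le> fps_conv_radius F"
  unfolding fps_conv_radius_def
proof (rule conv_radius_geI_ex')
  fix r :: real assume "0 < r" "ereal r < conv_radius (fps_nth G)"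
  then have "summable (\<lambda>n. norm (G $ n * of_real r ^ n))"
    by (intro norm_summable_fps) (simp add: fps_conv_radius_def)
  then show "summable (\<lambda>n. F $ n * of_real r ^ n)"
    by (rule summable_comparison_test[rotated])
       (use \<open>0 < r\<close> assms in \<open>auto simp: norm_mult norm_power intro!: mult_right_mono\<close>)
qed

lemma fps_conv_radius_fps_XD:
  fixes F :: "'a::{banach, real_normed_field} fps"
  shows "fps_conv_radius F \<le> fps_conv_radius (fps_XD F)"
  using fps_conv_radius_mult[of fps_X "fps_deriv F"] fps_conv_radius_deriv[of F]
  by (simp add: fps_XD_def)

lemma fps_conv_radius_geometric:
  "1 \<le> fps_conv_radius (Abs_fps (\<lambda>_. 1 :: 'a::{banach, real_normed_field}))"
  unfolding fps_conv_radius_def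
proof (rule conv_radius_geI_ex')
  fix r :: real assume "0 < r" "ereal r < 1"
  then show "summable (\<lambda>n. Abs_fps (\<lambda>_. 1 :: 'a) $ n * of_real r ^ n)"
    using summable_geometric[of "of_real r :: 'a"] by simp
qed

lemma fps_conv_radius_of_nat_power:
  "1 \<le> fps_conv_radius (Abs_fps (\<lambda>n. of_nat n ^ p :: 'a::{banach, real_normed_field}))"
proof -
  have "Abs_fps (\<lambda>n. of_nat n ^ p :: 'a) = (fps_XD ^^ p) (Abs_fps (\<lambda>_. 1))"
    by (simp add: fps_mult_fps_XD_shift)
  also have "fps_conv_radius (Abs_fps (\<lambda>_. 1 :: 'a)) \<le> fps_conv_radius \<dots>"
    by (induction p) (auto intro: order.trans[OF _ fps_conv_radius_fps_XD])
  finally show ?thesis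
    using fps_conv_radius_geometric order.trans by blast
qed

lemma sigma_le_power: "sigma r n \<le> n ^ Suc r"
proof (cases "n = 0")
  case False
  then have "{d. d dvd n} \<subseteq> {1..n}"
    by (auto intro: dvd_imp_le Nat.gr0I)
  then have "card {d. d dvd n} \<le> n"
    using card_mono[of "{1..n}"] by simp
  have "sigma r n \<le> (\<Sum>d | d dvd n. n ^ r)"
    unfolding sigma_def using False by (intro sum_mono power_mono) (auto intro: dvd_imp_le)
  also have "\<dots> \<le> n * n ^ r"
    using \<open>card {d. d dvd n} \<le> n\<close> by simp
  finally show ?thesis
    by simp
qed simp

lemma fps_conv_radius_sigma_fps: "1 \<le> fps_conv_radius (sigma_fps r)"
proof -
  have "norm (sigma_fps r $ n) \<le> norm (Abs_fps (\<lambda>n. of_nat n ^ Suc r :: complex) $ n)" for n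
    using sigma_le_power[of r n] by (simp del: power_Suc flip: of_nat_power)
  then show ?thesis
    using fps_conv_radius_of_nat_power fps_conv_radius_le_of_norm_le order.trans by blast
qed

lemma fps_conv_radius_E_fps:
  "1 \<le> fps_conv_radius E2_fps" "1 \<le> fps_conv_radius E4_fps" "1 \<le> fps_conv_radius E6_fps"
  unfolding E2_fps_def E4_fps_def E6_fps_def
  by (intro fps_conv_radius_diff_ge fps_conv_radius_add_ge fps_conv_radius_mult_ge
      fps_conv_radius_sigma_fps; simp)+

lemma norm_less_fps_conv_radius: "1 \<le> fps_conv_radius F \<Longrightarrow> norm z < 1 \<Longrightarrow> norm z < fps_conv_radius F"
  by (erule less_le_trans[rotated]) simp

lemma eval_fps_ring_ops:
  fixes F G :: "complex fps"
  assumes "1 \<le> fps_conv_radius F" "1 \<le> fps_conv_radius G" "norm z < 1"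
  shows "eval_fps (F + G) z = eval_fps F z + eval_fps G z"
    and "eval_fps (F - G) z = eval_fps F z - eval_fps G z"
    and "eval_fps (F * G) z = eval_fps F z * eval_fps G z"
  using assms by (simp_all add: eval_fps_add eval_fps_diff eval_fps_mult norm_less_fps_conv_radius)

lemma eval_fps_numeral_mult:
  fixes F :: "complex fps"
  assumes "1 \<le> fps_conv_radius F" "norm z < 1"
  shows "eval_fps (numeral k * F) z = numeral k * eval_fps F z"
  using assms by (simp add: eval_fps_mult norm_less_fps_conv_radius)

lemma norm_qn_less_1: "\<tau> \<in> UHP \<Longrightarrow> norm (qn \<tau>) < 1"
  by (simp add: qn_def UHP_def norm_exp)

lemma eval_fps_XD_E2_fps:
  assumes "norm z < 1"
  shows "eval_fps (fps_XD E2_fps) z = (eval_fps E2_fps z ^ 2 - eval_fps E4_fps z) / 12"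
proof -
  have "1 \<le> fps_conv_radius (fps_XD E2_fps)"
    using fps_conv_radius_E_fps(1) fps_conv_radius_fps_XD order.trans by blast
  then have "12 * eval_fps (fps_XD E2_fps) z = eval_fps (12 * fps_XD E2_fps) z"
    using assms by (simp add: eval_fps_numeral_mult)
  also have "\<dots> = eval_fps E2_fps z ^ 2 - eval_fps E4_fps z"
    unfolding fps_XD_E2_fps power2_eq_square
    using assms fps_conv_radius_E_fps by (simp add: eval_fps_ring_ops fps_conv_radius_mult_ge)
  finally show ?thesis
    by (simp add: field_simps)
qed

lemma eval_fps_XD_E4_fps:
  assumes "norm z < 1"
  shows "eval_fps (fps_XD E4_fps) z =
    (eval_fps E2_fps z * eval_fps E4_fps z - eval_fps E6_fps z) / 3"
proof -
  have "1 \<le> fps_conv_radius (fps_XD E4_fps)"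
    using fps_conv_radius_E_fps(2) fps_conv_radius_fps_XD order.trans by blast
  then have "3 * eval_fps (fps_XD E4_fps) z = eval_fps (3 * fps_XD E4_fps) z"
    using assms by (simp add: eval_fps_numeral_mult)
  also have "\<dots> = eval_fps E2_fps z * eval_fps E4_fps z - eval_fps E6_fps z"
    unfolding fps_XD_E4_fps
    using assms fps_conv_radius_E_fps by (simp add: eval_fps_ring_ops fps_conv_radius_mult_ge)
  finally show ?thesis
    by (simp add: field_simps)
qed

lemma eval_fps_XD_E6_fps:
  assumes "norm z < 1"
  shows "eval_fps (fps_XD E6_fps) z =
    (eval_fps E2_fps z * eval_fps E6_fps z - eval_fps E4_fps z ^ 2) / 2"
proof -
  have "1 \<le> fps_conv_radius (fps_XD E6_fps)"
    using fps_conv_radius_E_fps(3) fps_conv_radius_fps_XD order.trans by blast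
  then have "2 * eval_fps (fps_XD E6_fps) z = eval_fps (2 * fps_XD E6_fps) z"
    using assms by (simp add: eval_fps_numeral_mult)
  also have "\<dots> = eval_fps E2_fps z * eval_fps E6_fps z - eval_fps E4_fps z ^ 2"
    unfolding fps_XD_E6_fps power2_eq_square
    using assms fps_conv_radius_E_fps by (simp add: eval_fps_ring_ops fps_conv_radius_mult_ge)
  finally show ?thesis
    by (simp add: field_simps)
qed

lemma eval_sigma_fps:
  assumes "norm q < 1"
  shows "eval_fps (sigma_fps r) q = (\<Sum>n. of_nat (sigma r (Suc n)) * q ^ Suc n)"
proof -
  have "(\<lambda>n. fps_nth (sigma_fps r) n * q ^ n) sums eval_fps (sigma_fps r) q"
    using assms fps_conv_radius_sigma_fps by (intro sums_eval_fps norm_less_fps_conv_radius)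
  then have "(\<lambda>n. fps_nth (sigma_fps r) (Suc n) * q ^ Suc n) sums eval_fps (sigma_fps r) q"
    by (subst sums_Suc_iff) simp
  then show ?thesis
    by (simp add: sums_iff)
qed

lemma E_eq_eval_fps:
  assumes "\<tau> \<in> UHP"
  shows "E2 \<tau> = eval_fps E2_fps (qn \<tau>)" and "E4 \<tau> = eval_fps E4_fps (qn \<tau>)"
    and "E6 \<tau> = eval_fps E6_fps (qn \<tau>)"
  using norm_qn_less_1[OF assms] fps_conv_radius_sigma_fps
  by (simp_all add: E2_def E4_def E6_def E2_fps_def E4_fps_def E6_fps_def eval_fps_ring_ops
      eval_fps_numeral_mult eval_sigma_fps fps_conv_radius_mult_ge)


section \<open>Normalized derivatives on the upper half plane\<close>

lemma open_UHP: "open UHP"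
  unfolding UHP_def using open_halfspace_Im_gt[of 0] by simp

lemma connected_UHP: "connected UHP"
  unfolding UHP_def using convex_connected convex_halfspace_Im_gt by blast

definition has_Dq :: "(complex \<Rightarrow> complex) \<Rightarrow> (complex \<Rightarrow> complex) \<Rightarrow> bool" where
  "has_Dq f g \<longleftrightarrow> (\<forall>\<tau>\<in>UHP. (f has_field_derivative 2 * pi * \<i> * g \<tau>) (at \<tau>))"

lemma has_Dq_imp_Dq_eq: "has_Dq f g \<Longrightarrow> \<tau> \<in> UHP \<Longrightarrow> Dq f \<tau> = g \<tau>"
  unfolding has_Dq_def Dq_def by (auto dest!: DERIV_imp_deriv)

lemma has_Dq_imp_holomorphic: "has_Dq f g \<Longrightarrow> f holomorphic_on UHP"
  unfolding has_Dq_def holomorphic_on_def field_differentiable_def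
  by (meson has_field_derivative_at_within)

lemma holomorphic_imp_has_Dq: "f holomorphic_on UHP \<Longrightarrow> has_Dq f (Dq f)"
  unfolding has_Dq_def Dq_def using holomorphic_derivI[OF _ open_UHP] by simp

lemma holomorphic_on_Dq: "f holomorphic_on UHP \<Longrightarrow> Dq f holomorphic_on UHP"
  unfolding Dq_def[abs_def] by (intro holomorphic_intros holomorphic_deriv open_UHP) auto

lemma has_Dq_cong_fun: "has_Dq f g \<Longrightarrow> (\<And>\<tau>. \<tau> \<in> UHP \<Longrightarrow> f \<tau> = f' \<tau>) \<Longrightarrow> has_Dq f' g"
  using open_UHP unfolding has_Dq_def by (auto intro: has_field_derivative_transform_within_open)

lemma has_Dq_cong_deriv: "has_Dq f g \<Longrightarrow> (\<And>\<tau>. \<tau> \<in> UHP \<Longrightarrow> g \<tau> = g' \<tau>) \<Longrightarrow> has_Dq f g'"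
  unfolding has_Dq_def by simp

lemma has_Dq_const: "has_Dq (\<lambda>\<tau>. c) (\<lambda>\<tau>. 0)"
  unfolding has_Dq_def by (auto intro!: derivative_eq_intros)

lemma has_Dq_add: "has_Dq f g \<Longrightarrow> has_Dq h k \<Longrightarrow> has_Dq (\<lambda>\<tau>. f \<tau> + h \<tau>) (\<lambda>\<tau>. g \<tau> + k \<tau>)"
  unfolding has_Dq_def by (auto intro!: derivative_eq_intros simp: algebra_simps)

lemma has_Dq_diff: "has_Dq f g \<Longrightarrow> has_Dq h k \<Longrightarrow> has_Dq (\<lambda>\<tau>. f \<tau> - h \<tau>) (\<lambda>\<tau>. g \<tau> - k \<tau>)"
  unfolding has_Dq_def by (auto intro!: derivative_eq_intros simp: algebra_simps)

lemma has_Dq_mult: "has_Dq f g \<Longrightarrow> has_Dq h k \<Longrightarrow> has_Dq (\<lambda>\<tau>. f \<tau> * h \<tau>) (\<lambda>\<tau>. g \<tau> * h \<tau> + f \<tau> * k \<tau>)"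
  unfolding has_Dq_def by (auto intro!: derivative_eq_intros simp: algebra_simps)

lemma has_Dq_cmult: "has_Dq f g \<Longrightarrow> has_Dq (\<lambda>\<tau>. c * f \<tau>) (\<lambda>\<tau>. c * g \<tau>)"
  unfolding has_Dq_def by (auto intro!: derivative_eq_intros)

lemma has_Dq_divide_const: "has_Dq f g \<Longrightarrow> has_Dq (\<lambda>\<tau>. f \<tau> / c) (\<lambda>\<tau>. g \<tau> / c)"
  using has_Dq_cmult[of f g "inverse c"] by (simp add: divide_inverse mult.commute)

lemma has_Dq_power: "has_Dq f g \<Longrightarrow> has_Dq (\<lambda>\<tau>. f \<tau> ^ n) (\<lambda>\<tau>. of_nat n * f \<tau> ^ (n - 1) * g \<tau>)"
  unfolding has_Dq_def by (auto intro!: derivative_eq_intros simp: algebra_simps)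

lemma has_Dq_eval_fps:
  assumes "1 \<le> fps_conv_radius F" and f: "\<And>\<tau>. \<tau> \<in> UHP \<Longrightarrow> f \<tau> = eval_fps F (qn \<tau>)"
  shows "has_Dq f (\<lambda>\<tau>. eval_fps (fps_XD F) (qn \<tau>))"
  unfolding has_Dq_def
proof
  fix \<tau> assume \<tau>: "\<tau> \<in> UHP"
  have q: "norm (qn \<tau>) < fps_conv_radius F"
    using assms(1) norm_qn_less_1[OF \<tau>] by (rule norm_less_fps_conv_radius)
  have "(qn has_field_derivative 2 * pi * \<i> * qn \<tau>) (at \<tau>)"
    unfolding qn_def by (auto intro!: derivative_eq_intros)
  then have "((\<lambda>\<tau>. eval_fps F (qn \<tau>)) has_field_derivative
      eval_fps (fps_deriv F) (qn \<tau>) * (2 * pi * \<i> * qn \<tau>)) (at \<tau>)"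
    by (rule DERIV_chain2[rotated]) (rule has_field_derivative_eval_fps[OF q])
  moreover have "eval_fps (fps_XD F) (qn \<tau>) = qn \<tau> * eval_fps (fps_deriv F) (qn \<tau>)"
    using q fps_conv_radius_deriv[of F] by (simp add: fps_XD_def eval_fps_mult)
  ultimately show "(f has_field_derivative 2 * pi * \<i> * eval_fps (fps_XD F) (qn \<tau>)) (at \<tau>)"
    using f open_UHP \<tau>
    by (auto simp: algebra_simps intro: has_field_derivative_transform_within_open)
qed

lemma has_Dq_E2: "has_Dq E2 (\<lambda>\<tau>. (E2 \<tau> ^ 2 - E4 \<tau>) / 12)"
  by (rule has_Dq_cong_fun[OF has_Dq_cong_deriv[OF has_Dq_eval_fps[OF fps_conv_radius_E_fps(1)]]])
     (simp_all add: E_eq_eval_fps eval_fps_XD_E2_fps norm_qn_less_1)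

lemma has_Dq_E4: "has_Dq E4 (\<lambda>\<tau>. (E2 \<tau> * E4 \<tau> - E6 \<tau>) / 3)"
  by (rule has_Dq_cong_fun[OF has_Dq_cong_deriv[OF has_Dq_eval_fps[OF fps_conv_radius_E_fps(2)]]])
     (simp_all add: E_eq_eval_fps eval_fps_XD_E4_fps norm_qn_less_1)

lemma has_Dq_E6: "has_Dq E6 (\<lambda>\<tau>. (E2 \<tau> * E6 \<tau> - E4 \<tau> ^ 2) / 2)"
  by (rule has_Dq_cong_fun[OF has_Dq_cong_deriv[OF has_Dq_eval_fps[OF fps_conv_radius_E_fps(3)]]])
     (simp_all add: E_eq_eval_fps eval_fps_XD_E6_fps norm_qn_less_1)

lemma has_Dq_Delta: "has_Dq Delta (\<lambda>\<tau>. E2 \<tau> * Delta \<tau>)"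
proof -
  have "has_Dq (\<lambda>\<tau>. (E4 \<tau> ^ 3 - E6 \<tau> ^ 2) / 1728)
      (\<lambda>\<tau>. (of_nat 3 * E4 \<tau> ^ (3 - 1) * ((E2 \<tau> * E4 \<tau> - E6 \<tau>) / 3)
            - of_nat 2 * E6 \<tau> ^ (2 - 1) * ((E2 \<tau> * E6 \<tau> - E4 \<tau> ^ 2) / 2)) / 1728)"
    by (intro has_Dq_divide_const has_Dq_diff has_Dq_power has_Dq_E4 has_Dq_E6)
  then show ?thesis
    by (rule has_Dq_cong_fun[OF has_Dq_cong_deriv])
       (simp_all add: Delta_def field_simps eval_nat_numeral)
qed

lemma E4_not_identically_zero: "\<exists>\<tau>\<in>UHP. E4 \<tau> \<noteq> 0"
proof -
  have "isCont (eval_fps E4_fps) 0"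
    using fps_conv_radius_E_fps(2) by (intro continuous_eval_fps norm_less_fps_conv_radius) auto
  moreover have "eval_fps E4_fps 0 \<noteq> 0"
    by (simp add: eval_fps_at_0 E4_fps_def)
  ultimately obtain \<delta> where "\<delta> > 0" and \<delta>: "\<And>q. dist 0 q < \<delta> \<Longrightarrow> eval_fps E4_fps q \<noteq> 0"
    using continuous_at_avoid by blast
  define t where "t = (\<bar>ln \<delta>\<bar> + 1) / (2 * pi)"
  have "t > 0"
    by (simp add: t_def add_pos_nonneg)
  then have \<tau>: "\<i> * of_real t \<in> UHP"
    by (simp add: UHP_def)
  have "qn (\<i> * of_real t) = of_real (exp (- (\<bar>ln \<delta>\<bar> + 1)))"
    by (simp add: qn_def t_def flip: exp_of_real)
  moreover have "exp (- (\<bar>ln \<delta>\<bar> + 1)) < \<delta>"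
    using \<open>\<delta> > 0\<close> exp_less_mono[of "- (\<bar>ln \<delta>\<bar> + 1)" "ln \<delta>"] by simp
  ultimately have "E4 (\<i> * of_real t) \<noteq> 0"
    using \<delta> E_eq_eval_fps(2)[OF \<tau>] by simp
  with \<tau> show ?thesis
    by blast
qed


section \<open>The differential equations\<close>

definition ode_lhs :: "real \<Rightarrow> (complex \<Rightarrow> complex) \<Rightarrow> complex \<Rightarrow> complex" where
  "ode_lhs m f \<tau> = Dq (Dq f) \<tau> - of_real ((m + 1) / 6) * E2 \<tau> * Dq f \<tau>
     + of_real (m * (m + 1) / 12) * Dq E2 \<tau> * f \<tau>"

lemma solves_eq_iff_ode_lhs: "solves_eq m f \<longleftrightarrow> f holomorphic_on UHP \<and> (\<forall>\<tau>\<in>UHP. ode_lhs m f \<tau> = 0)"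
  by (simp add: solves_eq_def ode_lhs_def)

lemma ode_lhs_E6_Delta:
  assumes G: "G holomorphic_on UHP" and H: "H holomorphic_on UHP" and \<tau>: "\<tau> \<in> UHP"
  shows "ode_lhs (k + 6) (\<lambda>\<tau>. E6 \<tau> * G \<tau> + Delta \<tau> * H \<tau>) \<tau> =
    E6 \<tau> * ode_lhs k G \<tau> + Delta \<tau> * ode_lhs (k - 6) H \<tau>
    + E4 \<tau> / 4 * (RC_E4 k G \<tau> - of_real (2 / 3 * (k + 1)) * Delta \<tau> * H \<tau>)"
proof -
  define f1 where "f1 \<tau> = (E2 \<tau> * E6 \<tau> - E4 \<tau> ^ 2) / 2 * G \<tau> + E6 \<tau> * Dq G \<tau>
    + E2 \<tau> * Delta \<tau> * H \<tau> + Delta \<tau> * Dq H \<tau>" for \<tau>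
  define f2 where "f2 \<tau> = ((E2 \<tau> ^ 2 - E4 \<tau>) / 12 * E6 \<tau> + E2 \<tau> * (E2 \<tau> * E6 \<tau> - E4 \<tau> ^ 2) / 2
      - 2 * E4 \<tau> * (E2 \<tau> * E4 \<tau> - E6 \<tau>) / 3) / 2 * G \<tau>
    + (E2 \<tau> * E6 \<tau> - E4 \<tau> ^ 2) * Dq G \<tau> + E6 \<tau> * Dq (Dq G) \<tau>
    + ((E2 \<tau> ^ 2 - E4 \<tau>) / 12 + E2 \<tau> ^ 2) * Delta \<tau> * H \<tau> + 2 * E2 \<tau> * Delta \<tau> * Dq H \<tau>
    + Delta \<tau> * Dq (Dq H) \<tau>" for \<tau>
  have dG: "has_Dq G (Dq G)" "has_Dq (Dq G) (Dq (Dq G))"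
    using G by (simp_all add: holomorphic_imp_has_Dq holomorphic_on_Dq)
  have dH: "has_Dq H (Dq H)" "has_Dq (Dq H) (Dq (Dq H))"
    using H by (simp_all add: holomorphic_imp_has_Dq holomorphic_on_Dq)
  have df: "has_Dq (\<lambda>\<tau>. E6 \<tau> * G \<tau> + Delta \<tau> * H \<tau>) f1"
    unfolding f1_def[abs_def]
    by (rule has_Dq_cong_deriv, (rule has_Dq_add has_Dq_mult has_Dq_E6 has_Dq_Delta dG dH)+)
       (simp add: algebra_simps)
  have "has_Dq f1 f2"
    unfolding f1_def[abs_def] f2_def[abs_def]
    by (rule has_Dq_cong_deriv, (rule has_Dq_add has_Dq_mult has_Dq_diff has_Dq_divide_const
        has_Dq_power has_Dq_E2 has_Dq_E4 has_Dq_E6 has_Dq_Delta dG dH has_Dq_const)+)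
       (simp add: field_simps eval_nat_numeral)
  then have ddf: "has_Dq (Dq (\<lambda>\<tau>. E6 \<tau> * G \<tau> + Delta \<tau> * H \<tau>)) f2"
    by (rule has_Dq_cong_fun) (simp add: has_Dq_imp_Dq_eq[OF df])
  show ?thesis
    using \<tau>
    by (simp add: ode_lhs_def RC_E4_def has_Dq_imp_Dq_eq[OF df] has_Dq_imp_Dq_eq[OF ddf]
        has_Dq_imp_Dq_eq[OF has_Dq_E2] has_Dq_imp_Dq_eq[OF has_Dq_E4] f1_def f2_def)
       (simp add: field_simps eval_nat_numeral)
qed

lemma holomorphic_mult_eq_0_imp_eq_0:
  assumes "f holomorphic_on S" "g holomorphic_on S" "open S" "connected S"
    and "z0 \<in> S" "f z0 \<noteq> 0" and "\<And>z. z \<in> S \<Longrightarrow> f z * g z = 0" and "z \<in> S"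
  shows "g z = 0"
proof (rule analytic_continuation_open[of "S \<inter> f -` (- {0})" S g "\<lambda>_. 0"])
  show "open (S \<inter> f -` (- {0}))"
    using assms(1,3) by (intro continuous_open_preimage holomorphic_on_imp_continuous_on) auto
qed (use assms in auto)

theorem mainTheorem6:
  fixes k :: real and Gk Gkm6 :: "complex \<Rightarrow> complex"
  assumes "\<exists>n::nat. k = real n / 2"
    and "solves_eq k Gk"
    and "solves_eq (k - 6) Gkm6"
  shows "solves_eq (k + 6) (\<lambda>\<tau>. E6 \<tau> * Gk \<tau> + Delta \<tau> * Gkm6 \<tau>) \<longleftrightarrow>
         (\<forall>\<tau>\<in>UHP. RC_E4 k Gk \<tau> = of_real (2 / 3 * (k + 1)) * Delta \<tau> * Gkm6 \<tau>)"
proof -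
  have G: "Gk holomorphic_on UHP" "\<forall>\<tau>\<in>UHP. ode_lhs k Gk \<tau> = 0"
    and H: "Gkm6 holomorphic_on UHP" "\<forall>\<tau>\<in>UHP. ode_lhs (k - 6) Gkm6 \<tau> = 0"
    using assms(2,3) by (simp_all add: solves_eq_iff_ode_lhs)
  have holo: "E4 holomorphic_on UHP" "E6 holomorphic_on UHP" "Delta holomorphic_on UHP"
    using has_Dq_E4 has_Dq_E6 has_Dq_Delta by (auto intro: has_Dq_imp_holomorphic)
  define X where "X \<tau> = RC_E4 k Gk \<tau> - of_real (2 / 3 * (k + 1)) * Delta \<tau> * Gkm6 \<tau>" for \<tau>
  have "X holomorphic_on UHP"
    unfolding X_def[abs_def] RC_E4_def using G(1) H(1) holo
    by (intro holomorphic_intros holomorphic_on_Dq)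
  have "solves_eq (k + 6) (\<lambda>\<tau>. E6 \<tau> * Gk \<tau> + Delta \<tau> * Gkm6 \<tau>) \<longleftrightarrow> (\<forall>\<tau>\<in>UHP. E4 \<tau> / 4 * X \<tau> = 0)"
    using G H holo by (simp add: solves_eq_iff_ode_lhs ode_lhs_E6_Delta X_def holomorphic_intros)
  also have "\<dots> \<longleftrightarrow> (\<forall>\<tau>\<in>UHP. X \<tau> = 0)"
    using E4_not_identically_zero holo(1)
      holomorphic_mult_eq_0_imp_eq_0[OF _ \<open>X holomorphic_on UHP\<close> open_UHP connected_UHP]
    by (fastforce intro: holomorphic_intros)
  finally show ?thesis
    by (simp add: X_def)
qed

end
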